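(* Let $M$ be a bicomplex Hilbert space (as defined below) and let $A:M\to M$ be a bicomplex self-adjoint operator, i.e. a $\mathbb{T}$-linear operator with $A=A^*$. Suppose $A|\psi\rangle=\lambda|\psi\rangle$ with $\lambda\in\mathbb{T}$ and $|\psi\rangle\in M$ not in the null-cone, i.e. $|\psi\rangle=\mathbf{e_1}|\psi_{\mathbf{e_1}}\rangle+\mathbf{e_2}|\psi_{\mathbf{e_2}}\rangle$ with $|\psi_{\mathbf{e_1}}\rangle\ne0$ and $|\psi_{\mathbf{e_2}}\rangle\ne0$. Then $\lambda\in\mathbb{D}$, i.e. $\lambda$ is a hyperbolic number.
   Context: Bicomplex numbers: $\mathbb{T}=\{z_1+z_2\mathbf{i_2}: z_1,z_2\in\mathbb{C}(\mathbf{i_1})\}$, $\mathbb{C}(\mathbf{i_1})=\{x+y\mathbf{i_1}: x,y\in\mathbb{R}\}$, $\mathbf{i_1}^2=\mathbf{i_2}^2=-1$, $\mathbf{i_1}\mathbf{i_2}=\mathbf{i_2}\mathbf{i_1}=\mathbf{j}$, $\mathbf{j}^2=1$ (commutative). Hyperbolic numbers $\mathbb{D}=\{x+y\mathbf{j}:x,y\in\mathbb{R}\}$. Idempotents $\mathbf{e_1}=(1+\mathbf{j})/2$, $\mathbf{e_2}=(1-\mathbf{j})/2$. Conjugation: $(z_1+z_2\mathbf{i_2})^{\dagger_3}=\overline{z_1}-\overline{z_2}\mathbf{i_2}$. $\mathbb{D}^+=\{a\mathbf{e_1}+b\mathbf{e_2}: a,b\ge 0\}$. $M$ is a free $\mathbb{T}$-module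 with finite basis $\{|m_1\rangle,\dots,|m_n\rangle\}$, $V=\{\sum x_l|m_l\rangle: x_l\in\mathbb{C}(\mathbf{i_1})\}$; for $|\phi\rangle=\sum x_l|m_l\rangle$ with $x_l=x_{1l}\mathbf{e_1}+x_{2l}\mathbf{e_2}$, $x_{kl}\in\mathbb{C}(\mathbf{i_1})$, set $|\phi_{\mathbf{e_k}}\rangle=\sum_l x_{kl}|m_l\rangle\in V$, so $|\phi\rangle=\mathbf{e_1}|\phi_{\mathbf{e_1}}\rangle+\mathbf{e_2}|\phi_{\mathbf{e_2}}\rangle$ uniquely. $M$ carries a bicomplex scalar product $(\cdot,\cdot):M\times M\to\mathbb{T}$: additive in the second argument, $(|\phi\rangle,\alpha|\psi\rangle)=\alpha(|\phi\rangle,|\psi\rangle)$ for $\alpha\in\mathbb{T}$, $(|\phi\rangle,|\psi\rangle)=(|\psi\rangle,|\phi\rangle)^{\dagger_3}$, $(|\phi\rangle,|\phi\rangle)=0\iff|\phi\rangle=0$, hyperbolic positive ($(|\phi\rangle,|\phi\rangle)\in\mathbb{D}^+$) and closed on $V$ ($(|\phi\rangle,|\psi\rangle)\in\mathbb{C}(\mathbf{i_1})$ for $|\phi\rangle,|\psi\rangle\in V$); "bicomplex Hilbert space" means moreover $M$ is complete for the norm $\|\phi\|=\big((\|\phi_{\mathbf{e_1}}\|^2+\|\phi_{\mathbf{e_2}}\|^2)/2\big)^{1/2}$, $\|\chi\|=(\chi,\chi)^{1/2}$ on $V$. The bicomplex adjoint $A^*$ of a $\mathbb{T}$-linear $A$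 is the operator with $(A|\psi\rangle,|\phi\rangle)=(|\psi\rangle,A^*|\phi\rangle)$ for all $|\phi\rangle,|\psi\rangle\in M$. *)

theory Defs
  imports Complex_Main
begin

text \<open>A bicomplex number z1 + z2 i2 with z1, z2 in C(i1); the complex unit of
  the type complex plays the role of i1.\<close>

datatype bicomplex = BC (bc1: complex) (bc2: complex)

instantiation bicomplex :: comm_ring_1
begin
definition "0 = BC 0 0"
definition "1 = BC 1 0"
definition "x + y = BC (bc1 x + bc1 y) (bc2 x + bc2 y)"
definition "x - y = BC (bc1 x - bc1 y) (bc2 x - bc2 y)"
definition "- x = BC (- bc1 x) (- bc2 x)"
definition "x * y = BC (bc1 x * bc1 y - bc2 x * bc2 y) (bc1 x * bc2 y + bc2 x * bc1 y)"
instance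
  by standard
     (auto simp: zero_bicomplex_def one_bicomplex_def plus_bicomplex_def
        minus_bicomplex_def uminus_bicomplex_def times_bicomplex_def algebra_simps
        intro!: bicomplex.expand)
end

definition bc_i1 :: bicomplex where "bc_i1 = BC \<i> 0"
definition bc_i2 :: bicomplex where "bc_i2 = BC 0 1"
definition bc_j :: bicomplex where "bc_j = bc_i1 * bc_i2"
definition bc_e1 :: bicomplex where "bc_e1 = BC (1/2) 0 * (1 + bc_j)"
definition bc_e2 :: bicomplex where "bc_e2 = BC (1/2) 0 * (1 - bc_j)"

definition of_cplx :: "complex \<Rightarrow> bicomplex" where "of_cplx z = BC z 0"

definition hyperbolic :: "bicomplex set" where
  "hyperbolic = {of_cplx (complex_of_real x) + of_cplx (complex_of_real y) * bc_j | x y. True}"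

definition hyperbolic_pos :: "bicomplex set" where
  "hyperbolic_pos = {of_cplx (complex_of_real a) * bc_e1 + of_cplx (complex_of_real b) * bc_e2
                     | a b. a \<ge> 0 \<and> b \<ge> 0}"

definition conj3 :: "bicomplex \<Rightarrow> bicomplex" where
  "conj3 z = BC (cnj (bc1 z)) (- cnj (bc2 z))"

text \<open>Idempotent components: z = proj1 z * e1 + proj2 z * e2 (unique, with
  proj_k z in C(i1)).\<close>
definition bc_proj1 :: "bicomplex \<Rightarrow> complex" where "bc_proj1 z = bc1 z - \<i> * bc2 z"
definition bc_proj2 :: "bicomplex \<Rightarrow> complex" where "bc_proj2 z = bc1 z + \<i> * bc2 z"

text \<open>M is modelled as the coordinate module of functions 'n \<Rightarrow> bicomplex over a
  finite index type 'n; the basis vector |m_l> is the l-th unit vector.\<close>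

type_synonym 'n bvec = "'n \<Rightarrow> bicomplex"

definition vadd :: "'n bvec \<Rightarrow> 'n bvec \<Rightarrow> 'n bvec" where "vadd x y = (\<lambda>l. x l + y l)"
definition vsub :: "'n bvec \<Rightarrow> 'n bvec \<Rightarrow> 'n bvec" where "vsub x y = (\<lambda>l. x l - y l)"
definition vscale :: "bicomplex \<Rightarrow> 'n bvec \<Rightarrow> 'n bvec" where "vscale a x = (\<lambda>l. a * x l)"
definition vzero :: "'n bvec" where "vzero = (\<lambda>l. 0)"

text \<open>V = the C(i1)-span of the basis.\<close>
definition Vspace :: "'n bvec set" where "Vspace = {x. \<forall>l. bc2 (x l) = 0}"

definition vproj1 :: "'n bvec \<Rightarrow> 'n bvec" where "vproj1 x = (\<lambda>l. of_cplx (bc_proj1 (x l)))"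
definition vproj2 :: "'n bvec \<Rightarrow> 'n bvec" where "vproj2 x = (\<lambda>l. of_cplx (bc_proj2 (x l)))"

definition bicomplex_scalar_product :: "('n::finite bvec \<Rightarrow> 'n bvec \<Rightarrow> bicomplex) \<Rightarrow> bool" where
  "bicomplex_scalar_product sp \<longleftrightarrow>
     (\<forall>\<phi> \<psi> \<chi>. sp \<phi> (vadd \<psi> \<chi>) = sp \<phi> \<psi> + sp \<phi> \<chi>) \<and>
     (\<forall>\<phi> \<psi> \<alpha>. sp \<phi> (vscale \<alpha> \<psi>) = \<alpha> * sp \<phi> \<psi>) \<and>
     (\<forall>\<phi> \<psi>. sp \<phi> \<psi> = conj3 (sp \<psi> \<phi>)) \<and>
     (\<forall>\<phi>. sp \<phi> \<phi> = 0 \<longleftrightarrow> \<phi> = vzero) \<and>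
     (\<forall>\<phi>. sp \<phi> \<phi> \<in> hyperbolic_pos) \<and>
     (\<forall>\<phi> \<psi>. \<phi> \<in> Vspace \<longrightarrow> \<psi> \<in> Vspace \<longrightarrow> sp \<phi> \<psi> \<in> range of_cplx)"

text \<open>Norm on V: ||chi|| = (chi,chi)^(1/2) (a nonnegative real number for chi in V).\<close>
definition Vnorm :: "('n bvec \<Rightarrow> 'n bvec \<Rightarrow> bicomplex) \<Rightarrow> 'n bvec \<Rightarrow> real" where
  "Vnorm sp \<chi> = sqrt (Re (bc1 (sp \<chi> \<chi>)))"

definition Mnorm :: "('n bvec \<Rightarrow> 'n bvec \<Rightarrow> bicomplex) \<Rightarrow> 'n bvec \<Rightarrow> real" where
  "Mnorm sp \<phi> = sqrt ((Vnorm sp (vproj1 \<phi>) ^ 2 + Vnorm sp (vproj2 \<phi>) ^ 2) / 2)"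

definition bicomplex_hilbert_space :: "('n::finite bvec \<Rightarrow> 'n bvec \<Rightarrow> bicomplex) \<Rightarrow> bool" where
  "bicomplex_hilbert_space sp \<longleftrightarrow> bicomplex_scalar_product sp \<and>
     (\<forall>X :: nat \<Rightarrow> 'n bvec.
        (\<forall>e>0. \<exists>N. \<forall>m\<ge>N. \<forall>k\<ge>N. Mnorm sp (vsub (X m) (X k)) < e) \<longrightarrow>
        (\<exists>L. \<forall>e>0. \<exists>N. \<forall>k\<ge>N. Mnorm sp (vsub (X k) L) < e))"

definition T_linear :: "('n bvec \<Rightarrow> 'n bvec) \<Rightarrow> bool" where
  "T_linear A \<longleftrightarrow> (\<forall>x y. A (vadd x y) = vadd (A x) (A y)) \<and>
                   (\<forall>a x. A (vscale a x) = vscale a (A x))"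

text \<open>A* is characterised by (A psi, phi) = (psi, A* phi); A = A* means:\<close>
definition self_adjoint :: "('n bvec \<Rightarrow> 'n bvec \<Rightarrow> bicomplex) \<Rightarrow> ('n bvec \<Rightarrow> 'n bvec) \<Rightarrow> bool" where
  "self_adjoint sp A \<longleftrightarrow> T_linear A \<and> (\<forall>\<psi> \<phi>. sp (A \<psi>) \<phi> = sp \<psi> (A \<phi>))"

end

theory Submission
  imports Defs
begin

text \<open>Write \<open>z = e1 z1 + e2 z2\<close> in idempotent coordinates. In these coordinates
  the bicomplex operations act componentwise, so \<open>(\<psi>,\<psi>) = e1 (\<psi>\<^sub>1,\<psi>\<^sub>1) + e2 (\<psi>\<^sub>2,\<psi>\<^sub>2)\<close>,
  and both components are nonzero when \<open>\<psi>\<close> is outside the null cone; hence \<open>(\<psi>,\<psi>)\<close>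
  is not a zero divisor. Self-adjointness gives
  \<open>\<lambda>\<^sup>\<dagger>\<^sup>3 (\<psi>,\<psi>) = (A\<psi>,\<psi>) = (\<psi>,A\<psi>) = \<lambda> (\<psi>,\<psi>)\<close>, so \<open>\<lambda>\<^sup>\<dagger>\<^sup>3 = \<lambda>\<close>, and the fixed
  points of the third conjugation are exactly the hyperbolic numbers.\<close>

lemmas bicomplex_ops_defs = zero_bicomplex_def one_bicomplex_def plus_bicomplex_def
  minus_bicomplex_def uminus_bicomplex_def times_bicomplex_def

lemma bc_e1_eq: "bc_e1 = BC (1/2) (\<i>/2)"
  and bc_e2_eq: "bc_e2 = BC (1/2) (- \<i>/2)"
  by (simp_all add: bc_e1_def bc_e2_def bc_j_def bc_i1_def bc_i2_def bicomplex_ops_defs)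

lemma conj3_add: "conj3 (a + b) = conj3 a + conj3 b"
  and conj3_mult: "conj3 (a * b) = conj3 a * conj3 b"
  and conj3_e1: "conj3 bc_e1 = bc_e1"
  and conj3_e2: "conj3 bc_e2 = bc_e2"
  by (simp_all add: conj3_def bicomplex_ops_defs bc_e1_eq bc_e2_eq)

lemma conj3_fixed_iff_hyperbolic: "conj3 z = z \<longleftrightarrow> z \<in> hyperbolic"
proof
  assume "conj3 z = z"
  then have "cnj (bc1 z) = bc1 z" and "- cnj (bc2 z) = bc2 z"
    by (metis bicomplex.sel conj3_def)+
  then have "Im (bc1 z) = 0" and "Re (bc2 z) = 0"
    by (simp_all add: complex_eq_iff)
  then have "z = of_cplx (Re (bc1 z)) + of_cplx (Im (bc2 z)) * bc_j"
    by (intro bicomplex.expand conjI)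
       (simp_all add: of_cplx_def bc_j_def bc_i1_def bc_i2_def bicomplex_ops_defs complex_eq_iff)
  then show "z \<in> hyperbolic"
    unfolding hyperbolic_def by blast
next
  assume "z \<in> hyperbolic"
  then show "conj3 z = z"
    by (auto simp: hyperbolic_def conj3_def of_cplx_def bc_j_def bc_i1_def bc_i2_def
        bicomplex_ops_defs)
qed

lemma bc_proj_add:
  "bc_proj1 (a + b) = bc_proj1 a + bc_proj1 b" "bc_proj2 (a + b) = bc_proj2 a + bc_proj2 b"
  by (simp_all add: bc_proj1_def bc_proj2_def bicomplex_ops_defs algebra_simps)

lemma bc_proj_mult:
  "bc_proj1 (a * b) = bc_proj1 a * bc_proj1 b" "bc_proj2 (a * b) = bc_proj2 a * bc_proj2 b"
  by (simp_all add: bc_proj1_def bc_proj2_def bicomplex_ops_defs algebra_simps)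

lemma bc_proj_e1: "bc_proj1 bc_e1 = 1" "bc_proj2 bc_e1 = 0"
  and bc_proj_e2: "bc_proj1 bc_e2 = 0" "bc_proj2 bc_e2 = 1"
  and bc_proj_of_cplx: "bc_proj1 (of_cplx w) = w" "bc_proj2 (of_cplx w) = w"
  by (simp_all add: bc_e1_eq bc_e2_eq of_cplx_def bc_proj1_def bc_proj2_def)

lemmas bc_proj_simps = bc_proj_add bc_proj_mult bc_proj_e1 bc_proj_e2 bc_proj_of_cplx

lemma bicomplex_eq_iff_proj: "a = b \<longleftrightarrow> bc_proj1 a = bc_proj1 b \<and> bc_proj2 a = bc_proj2 b"
proof (intro iffI)
  assume "bc_proj1 a = bc_proj1 b \<and> bc_proj2 a = bc_proj2 b"
  then have "bc_proj1 a + bc_proj2 a = bc_proj1 b + bc_proj2 b"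
    and "bc_proj2 a - bc_proj1 a = bc_proj2 b - bc_proj1 b"
    by simp_all
  then show "a = b"
    by (intro bicomplex.expand conjI) (simp_all add: bc_proj1_def bc_proj2_def)
qed simp

lemma bicomplex_idempotent_decomp:
  "z = bc_e1 * of_cplx (bc_proj1 z) + bc_e2 * of_cplx (bc_proj2 z)"
  by (simp add: bicomplex_eq_iff_proj bc_proj_simps)

lemma mult_right_cancel_outside_null_cone:
  assumes "a * c = b * c" and "bc_proj1 c \<noteq> 0" and "bc_proj2 c \<noteq> 0"
  shows "a = b"
  using assms by (simp add: bicomplex_eq_iff_proj bc_proj_mult)

lemma vec_idempotent_decomp: "\<phi> = vadd (vscale bc_e1 (vproj1 \<phi>)) (vscale bc_e2 (vproj2 \<phi>))"
  unfolding vadd_def vscale_def vproj1_def vproj2_def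
  by (rule ext) (rule bicomplex_idempotent_decomp)

lemma vproj_in_Vspace: "vproj1 \<phi> \<in> Vspace" "vproj2 \<phi> \<in> Vspace"
  by (simp_all add: Vspace_def vproj1_def vproj2_def of_cplx_def)

context
  fixes sp :: "'n::finite bvec \<Rightarrow> 'n bvec \<Rightarrow> bicomplex"
  assumes sp: "bicomplex_scalar_product sp"
begin

lemma sp_add_right: "sp \<phi> (vadd \<psi> \<chi>) = sp \<phi> \<psi> + sp \<phi> \<chi>"
  and sp_scale_right: "sp \<phi> (vscale \<alpha> \<psi>) = \<alpha> * sp \<phi> \<psi>"
  and sp_conj_sym: "sp \<phi> \<psi> = conj3 (sp \<psi> \<phi>)"
  and sp_self_eq_zero_iff: "sp \<phi> \<phi> = 0 \<longleftrightarrow> \<phi> = vzero"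
  using sp unfolding bicomplex_scalar_product_def by blast+

lemma sp_Vspace_closed: "\<phi> \<in> Vspace \<Longrightarrow> \<psi> \<in> Vspace \<Longrightarrow> sp \<phi> \<psi> \<in> range of_cplx"
  using sp unfolding bicomplex_scalar_product_def by blast

lemma sp_add_left: "sp (vadd \<psi> \<chi>) \<phi> = sp \<psi> \<phi> + sp \<chi> \<phi>"
  by (metis sp_add_right sp_conj_sym conj3_add)

lemma sp_scale_left: "sp (vscale \<alpha> \<psi>) \<phi> = conj3 \<alpha> * sp \<psi> \<phi>"
  by (metis sp_scale_right sp_conj_sym conj3_mult)

lemma sp_self_idempotent_decomp:
  "sp \<phi> \<phi> = bc_e1 * sp (vproj1 \<phi>) (vproj1 \<phi>) + bc_e2 * sp (vproj2 \<phi>) (vproj2 \<phi>)"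
proof -
  have e_prods: "bc_e1 * bc_e1 = bc_e1" "bc_e2 * bc_e2 = bc_e2" "bc_e1 * bc_e2 = 0"
    by (simp_all add: bc_e1_eq bc_e2_eq bicomplex_ops_defs field_simps)
  show ?thesis
    apply (subst (1 2) vec_idempotent_decomp[of \<phi>])
    apply (simp add: sp_add_left sp_add_right sp_scale_left sp_scale_right conj3_e1 conj3_e2
        algebra_simps)
    apply (simp add: mult.assoc[symmetric] e_prods mult.commute[of bc_e2 bc_e1])
    done
qed

lemma sp_self_Vspace_nonzero:
  assumes "\<chi> \<in> Vspace" and "\<chi> \<noteq> vzero"
  obtains w where "sp \<chi> \<chi> = of_cplx w" and "w \<noteq> 0"
  using sp_Vspace_closed[OF assms(1) assms(1)] sp_self_eq_zero_iff assms(2)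
  by (force simp: of_cplx_def zero_bicomplex_def)

lemma sp_self_outside_null_cone:
  assumes "vproj1 \<phi> \<noteq> vzero" and "vproj2 \<phi> \<noteq> vzero"
  shows "bc_proj1 (sp \<phi> \<phi>) \<noteq> 0" and "bc_proj2 (sp \<phi> \<phi>) \<noteq> 0"
proof -
  obtain w1 where w1: "sp (vproj1 \<phi>) (vproj1 \<phi>) = of_cplx w1" "w1 \<noteq> 0"
    by (rule sp_self_Vspace_nonzero[OF vproj_in_Vspace(1) assms(1)])
  obtain w2 where w2: "sp (vproj2 \<phi>) (vproj2 \<phi>) = of_cplx w2" "w2 \<noteq> 0"
    by (rule sp_self_Vspace_nonzero[OF vproj_in_Vspace(2) assms(2)])
  have "bc_proj1 (sp \<phi> \<phi>) = w1" and "bc_proj2 (sp \<phi> \<phi>) = w2"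
    unfolding sp_self_idempotent_decomp[of \<phi>] w1(1) w2(1)
    by (simp_all add: bc_proj_simps)
  with w1(2) w2(2) show "bc_proj1 (sp \<phi> \<phi>) \<noteq> 0" and "bc_proj2 (sp \<phi> \<phi>) \<noteq> 0"
    by simp_all
qed

lemma self_adjoint_eigenvalue_conj3:
  assumes "self_adjoint sp A" and "A \<psi> = vscale lam \<psi>"
  shows "conj3 lam * sp \<psi> \<psi> = lam * sp \<psi> \<psi>"
proof -
  have "sp (A \<psi>) \<psi> = sp \<psi> (A \<psi>)"
    using assms(1) by (simp add: self_adjoint_def)
  then show ?thesis
    using assms(2) by (simp add: sp_scale_left sp_scale_right)
qed

end

theorem mainTheorem20:
  fixes sp :: "'n::finite bvec \<Rightarrow> 'n bvec \<Rightarrow> bicomplex"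
    and A :: "'n bvec \<Rightarrow> 'n bvec"
    and \<psi> :: "'n bvec"
    and lam :: bicomplex
  assumes "bicomplex_hilbert_space sp"
    and "self_adjoint sp A"
    and "A \<psi> = vscale lam \<psi>"
    and "vproj1 \<psi> \<noteq> vzero"
    and "vproj2 \<psi> \<noteq> vzero"
  shows "lam \<in> hyperbolic"
proof -
  have sp: "bicomplex_scalar_product sp"
    using assms(1) by (simp add: bicomplex_hilbert_space_def)
  have "conj3 lam = lam"
    using self_adjoint_eigenvalue_conj3[OF sp assms(2,3)]
      sp_self_outside_null_cone[OF sp assms(4,5)]
    by (rule mult_right_cancel_outside_null_cone)
  then show ?thesis
    by (simp add: conj3_fixed_iff_hyperbolic)
qed

end
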